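(* Let $k$ be admissible. Let $R=\mathrm{ad}(U(\mathfrak g))Q$ and $R^T=\mathrm{ad}(U(\mathfrak g))Q^T$. Let $u_1\ne0$ be an element of the zero-weight subspace $R_0$ of $R$, and $u_2\ne0$ an element of the zero-weight subspace $R^T_0$ of $R^T$. Let $p_1,p_2\in\mathbb C[h]$ be the unique polynomials with $$u_1\equiv p_1(h)\mod U(\mathfrak g)\mathfrak n_+,\qquad u_2\equiv p_2(h)\mod U(\mathfrak g)\mathfrak n_-.$$ Then for $\mu\in\mathfrak h^*$ the following are equivalent: (1) the irreducible highest weight $\mathfrak g$-module $V(\mu)$ is an $A(L(k,0))$-module; (2) $p_1(\mu)=0$; (3) $p_2(-\mu)=0$. Here $p(\mu)$ denotes $p$ evaluated at $h=\mu(h)$.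
   Context: $\mathfrak g=sl(2,\mathbb C)$ has basis $e,f,h$ with the usual relations, $\mathfrak h=\mathbb Ch$, $\mathfrak n_+=\mathbb Ce$, $\mathfrak n_-=\mathbb Cf$. The adjoint action is $\mathrm{ad}(x)u=xu-ux$. $x\mapsto x^T$ is the anti-automorphism of $U(\mathfrak g)$ with $x^T=-x$ for $x\in\mathfrak g$. $k=p/q$ is admissible: $q\in\mathbb N$, $p\in\mathbb Z$, $\gcd(p,q)=1$, $2q+p-2\ge0$. $L(k,0)$ is the simple quotient VOA of the level-$k$ vacuum $\hat{\mathfrak g}$-module $M(k,0)$, by the ideal generated by its singular vector $v_{sing}$. $Q=F([v_{sing}])\in U(\mathfrak g)$, where $F:A(M(k,0))\to U(\mathfrak g)$ is the isomorphism of Zhu's algebra given by $F[a_1(-i_1-1)\cdots a_n(-i_n-1)\mathbf 1]=(-1)^{i_1+\cdots+i_n}a_n\cdots a_1$. Then $A(L(k,0))\cong U(\mathfrak g)/\langle Q\rangle$, and a $\mathfrak g$-module is an $A(L(k,0))$-module iff it is annihilated by $Q$. $R$ and $R^T$ are irreducible $\mathfrak g$-modules isomorphic to $V(2N\omega)$, where $N=2q+p-1$ and $\omega$ is the fundamental weight ($\omega(h)=1$). Hence $R_0$ and $R^T_0$ are one-dimensional. *)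

theory Defs
  imports Complex_Main "HOL-Computational_Algebra.Polynomial"
begin

text \<open>A ring 'a together with a central embedding sc of the complex numbers
 (so 'a is a complex algebra) and elements e, f, h satisfying the sl2 relations
 such that the PBW monomials f^a h^b e^c form a basis over C.  Such an algebra
 is (canonically isomorphic to) U(sl(2,C)).\<close>

definition pbw_mono :: "'a::ring_1 \<Rightarrow> 'a \<Rightarrow> 'a \<Rightarrow> nat \<times> nat \<times> nat \<Rightarrow> 'a" where
  "pbw_mono e f h m = (case m of (a, b, c) \<Rightarrow> f ^ a * h ^ b * e ^ c)"

definition is_Usl2 :: "(complex \<Rightarrow> 'a::ring_1) \<Rightarrow> 'a \<Rightarrow> 'a \<Rightarrow> 'a \<Rightarrow> bool" where
  "is_Usl2 sc e f h \<longleftrightarrow>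
     (\<forall>a b. sc (a + b) = sc a + sc b) \<and> (\<forall>a b. sc (a * b) = sc a * sc b) \<and> sc 1 = 1 \<and>
     (\<forall>a x. sc a * x = x * sc a) \<and>
     e * f - f * e = h \<and> h * e - e * h = 2 * e \<and> h * f - f * h = - (2 * f) \<and>
     (\<forall>x. \<exists>c :: nat \<times> nat \<times> nat \<Rightarrow> complex. finite {m. c m \<noteq> 0} \<and>
            x = (\<Sum>m | c m \<noteq> 0. sc (c m) * pbw_mono e f h m)) \<and>
     (\<forall>c :: nat \<times> nat \<times> nat \<Rightarrow> complex. finite {m. c m \<noteq> 0} \<and>
            (\<Sum>m | c m \<noteq> 0. sc (c m) * pbw_mono e f h m) = 0 \<longrightarrow> (\<forall>m. c m = 0))"

definition is_transpose :: "(complex \<Rightarrow> 'a::ring_1) \<Rightarrow> 'a \<Rightarrow> 'a \<Rightarrow> 'a \<Rightarrow> ('a \<Rightarrow> 'a) \<Rightarrow> bool" where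
  "is_transpose sc e f h T \<longleftrightarrow>
     (\<forall>x y. T (x * y) = T y * T x) \<and> (\<forall>x y. T (x + y) = T x + T y) \<and>
     (\<forall>c. T (sc c) = sc c) \<and> T e = - e \<and> T f = - f \<and> T h = - h"

definition adj :: "'a::ring_1 \<Rightarrow> 'a \<Rightarrow> 'a" where
  "adj x u = x * u - u * x"

text \<open>ad(U(g))Q: the smallest C-subspace containing Q stable under ad e, ad f, ad h.\<close>
inductive_set ad_span :: "(complex \<Rightarrow> 'a::ring_1) \<Rightarrow> 'a \<Rightarrow> 'a \<Rightarrow> 'a \<Rightarrow> 'a \<Rightarrow> 'a set"
  for sc e f h Q where
  gen: "Q \<in> ad_span sc e f h Q"
| zero: "0 \<in> ad_span sc e f h Q"
| add: "u \<in> ad_span sc e f h Q \<Longrightarrow> v \<in> ad_span sc e f h Q \<Longrightarrow> u + v \<in> ad_span sc e f h Q"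
| smult: "u \<in> ad_span sc e f h Q \<Longrightarrow> sc c * u \<in> ad_span sc e f h Q"
| ad_e: "u \<in> ad_span sc e f h Q \<Longrightarrow> adj e u \<in> ad_span sc e f h Q"
| ad_f: "u \<in> ad_span sc e f h Q \<Longrightarrow> adj f u \<in> ad_span sc e f h Q"
| ad_h: "u \<in> ad_span sc e f h Q \<Longrightarrow> adj h u \<in> ad_span sc e f h Q"

definition ad_submodule :: "(complex \<Rightarrow> 'a::ring_1) \<Rightarrow> 'a \<Rightarrow> 'a \<Rightarrow> 'a \<Rightarrow> 'a set \<Rightarrow> bool" where
  "ad_submodule sc e f h W \<longleftrightarrow> 0 \<in> W \<and> (\<forall>u\<in>W. \<forall>v\<in>W. u + v \<in> W) \<and>
     (\<forall>c. \<forall>u\<in>W. sc c * u \<in> W) \<and> (\<forall>u\<in>W. adj e u \<in> W \<and> adj f u \<in> W \<and> adj h u \<in> W)"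

definition fin_dim :: "(complex \<Rightarrow> 'a::ring_1) \<Rightarrow> 'a set \<Rightarrow> bool" where
  "fin_dim sc W \<longleftrightarrow> (\<exists>S. finite S \<and> S \<subseteq> W \<and>
      W \<subseteq> {\<Sum>s\<in>S. sc (c s) * s | c. True})"

text \<open>W (an ad-submodule) is irreducible and isomorphic to V(n \<omega>), i.e. finite dimensional,
  irreducible, with a highest weight vector of h-weight n.\<close>
definition iso_V :: "(complex \<Rightarrow> 'a::ring_1) \<Rightarrow> 'a \<Rightarrow> 'a \<Rightarrow> 'a \<Rightarrow> 'a set \<Rightarrow> int \<Rightarrow> bool" where
  "iso_V sc e f h W n \<longleftrightarrow> ad_submodule sc e f h W \<and> fin_dim sc W \<and> W \<noteq> {0} \<and>
     (\<forall>W'. W' \<subseteq> W \<and> ad_submodule sc e f h W' \<longrightarrow> W' = {0} \<or> W' = W) \<and>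
     (\<exists>u\<in>W. u \<noteq> 0 \<and> adj e u = 0 \<and> adj h u = sc (of_int n) * u)"

definition zero_wt :: "'a::ring_1 \<Rightarrow> 'a set \<Rightarrow> 'a set" where
  "zero_wt h W = {u \<in> W. adj h u = 0}"

definition evalh :: "(complex \<Rightarrow> 'a::ring_1) \<Rightarrow> 'a \<Rightarrow> complex poly \<Rightarrow> 'a" where
  "evalh sc h p = (\<Sum>i\<le>degree p. sc (coeff p i) * h ^ i)"

text \<open>V(\<mu>) has basis v_i (i \<ge> 0, and i \<le> n if \<mu> = n \<in> N), with
  h v_i = (\<mu>-2i) v_i, f v_i = v_{i+1} (0 past the top), e v_{i+1} = (i+1)(\<mu>-i) v_i.
  Vectors are coefficient sequences; operators are defined on all sequences and vanish
  on the coordinates outside the allowed range.\<close>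

definition in_range :: "complex \<Rightarrow> nat \<Rightarrow> bool" where
  "in_range \<mu> i \<longleftrightarrow> (\<forall>n::nat. \<mu> = of_nat n \<longrightarrow> i \<le> n)"

definition Vcarrier :: "complex \<Rightarrow> (nat \<Rightarrow> complex) set" where
  "Vcarrier \<mu> = {v. finite {i. v i \<noteq> 0} \<and> (\<forall>i. \<not> in_range \<mu> i \<longrightarrow> v i = 0)}"

definition Hop :: "complex \<Rightarrow> (nat \<Rightarrow> complex) \<Rightarrow> (nat \<Rightarrow> complex)" where
  "Hop \<mu> v = (\<lambda>i. if in_range \<mu> i then (\<mu> - 2 * of_nat i) * v i else 0)"

definition Fop :: "complex \<Rightarrow> (nat \<Rightarrow> complex) \<Rightarrow> (nat \<Rightarrow> complex)" where
  "Fop \<mu> v = (\<lambda>i. if i = 0 \<or> \<not> in_range \<mu> i then 0 else v (i - 1))"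

definition Eop :: "complex \<Rightarrow> (nat \<Rightarrow> complex) \<Rightarrow> (nat \<Rightarrow> complex)" where
  "Eop \<mu> v = (\<lambda>i. if in_range \<mu> i then of_nat (i + 1) * (\<mu> - of_nat i) * v (Suc i) else 0)"

definition is_Vrep :: "(complex \<Rightarrow> 'a::ring_1) \<Rightarrow> 'a \<Rightarrow> 'a \<Rightarrow> 'a \<Rightarrow> complex
     \<Rightarrow> ('a \<Rightarrow> (nat \<Rightarrow> complex) \<Rightarrow> (nat \<Rightarrow> complex)) \<Rightarrow> bool" where
  "is_Vrep sc e f h \<mu> \<rho> \<longleftrightarrow>
     (\<forall>x y. \<rho> (x * y) = (\<lambda>v. \<rho> x (\<rho> y v))) \<and>
     (\<forall>x y. \<rho> (x + y) = (\<lambda>v i. \<rho> x v i + \<rho> y v i)) \<and>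
     (\<forall>c. \<rho> (sc c) = (\<lambda>v i. c * v i)) \<and>
     \<rho> e = Eop \<mu> \<and> \<rho> f = Fop \<mu> \<and> \<rho> h = Hop \<mu>"

text \<open>V(\<mu>) is annihilated by Q (equivalently, an A(L(k,0))-module when Q = F([v_sing])).\<close>
definition annihilates_V :: "(complex \<Rightarrow> 'a::ring_1) \<Rightarrow> 'a \<Rightarrow> 'a \<Rightarrow> 'a \<Rightarrow> 'a \<Rightarrow> complex \<Rightarrow> bool" where
  "annihilates_V sc e f h Q \<mu> \<longleftrightarrow>
     (\<forall>\<rho>. is_Vrep sc e f h \<mu> \<rho> \<longrightarrow> (\<forall>v\<in>Vcarrier \<mu>. \<rho> Q v = (\<lambda>_. 0)))"

definition admissible :: "int \<Rightarrow> int \<Rightarrow> bool" where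
  "admissible p q \<longleftrightarrow> q > 0 \<and> coprime p q \<and> 2 * q + p - 2 \<ge> 0"

end

theory Submission
  imports Defs
begin

(* The highest weight vector v of V(mu) is annihilated by e, so an element of U(g) acts on it
   only through its C[h]-part modulo U(g) n_+: u1 acts on v as the scalar p1(mu).  R is the
   adjoint string u, (ad f) u, ..., (ad f)^(2N) u of a highest weight vector u of weight 2N,
   and its zero-weight space is spanned by (ad f)^N u; hence u1 and T u2 = p2(-h) - f T(y) are
   nonzero multiples of this one vector, and comparing the coefficients of v in u1 v and
   (T u2) v gives (2) <-> (3).  For (1) <-> (2): if (ad f)^N u kills v, the
   whole string does, since the vectors above it would have weight higher than mu and those
   below it would be singular vectors of V(mu); then R, and with it Q, kills U(g) v = V(mu). *)

section \<open>The highest weight module V(\<mu>)\<close>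

definition seq_linear :: "((nat \<Rightarrow> complex) \<Rightarrow> (nat \<Rightarrow> complex)) \<Rightarrow> bool" where
  "seq_linear G \<longleftrightarrow> (\<forall>v w. G (\<lambda>i. v i + w i) = (\<lambda>i. G v i + G w i)) \<and>
                    (\<forall>c v. G (\<lambda>i. c * v i) = (\<lambda>i. c * G v i))"

lemma seq_linear_sum:
  assumes G: "seq_linear G" and S: "finite S"
  shows "G (\<lambda>i. \<Sum>m\<in>S. d m * w m i) = (\<lambda>i. \<Sum>m\<in>S. d m * G (w m) i)"
  using S
proof (induction S rule: finite_induct)
  case empty
  from G have "\<forall>c v. G (\<lambda>i. c * v i) = (\<lambda>i. c * G v i)"
    unfolding seq_linear_def by blast
  from spec[OF spec[OF this, of 0], of "\<lambda>_. 0"] show ?case by simp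
next
  case (insert x F)
  then show ?case using G unfolding seq_linear_def by simp
qed

lemma seq_linear_Eop: "seq_linear (Eop \<mu>)"
  unfolding seq_linear_def Eop_def by (auto simp: algebra_simps)

lemma seq_linear_Fop: "seq_linear (Fop \<mu>)"
  unfolding seq_linear_def Fop_def by (auto simp: algebra_simps)

lemma seq_linear_Hop: "seq_linear (Hop \<mu>)"
  unfolding seq_linear_def Hop_def by (auto simp: algebra_simps)

lemma in_range_le: "in_range \<mu> i \<Longrightarrow> j \<le> i \<Longrightarrow> in_range \<mu> j"
  unfolding in_range_def by auto

lemma in_range_0 [simp]: "in_range \<mu> 0"
  unfolding in_range_def by auto

lemma in_range_Suc_iff: "in_range \<mu> i \<Longrightarrow> \<not> in_range \<mu> (Suc i) \<longleftrightarrow> \<mu> = of_nat i"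
  unfolding in_range_def by (auto simp: not_less_eq_eq intro: antisym)

lemma Hop_Fop: "Hop \<mu> (Fop \<mu> w) = (\<lambda>i. Fop \<mu> (Hop \<mu> w) i - 2 * Fop \<mu> w i)"
proof
  fix i
  show "Hop \<mu> (Fop \<mu> w) i = Fop \<mu> (Hop \<mu> w) i - 2 * Fop \<mu> w i"
  proof (cases "i = 0 \<or> \<not> in_range \<mu> i")
    case False
    then have "in_range \<mu> (i - 1)" using in_range_le by auto
    with False show ?thesis unfolding Hop_def Fop_def by (auto simp: algebra_simps of_nat_diff)
  qed (auto simp: Hop_def Fop_def)
qed

lemma Eop_Fop: "Eop \<mu> (Fop \<mu> w) = (\<lambda>i. Fop \<mu> (Eop \<mu> w) i + Hop \<mu> w i)"
proof
  fix i
  show "Eop \<mu> (Fop \<mu> w) i = Fop \<mu> (Eop \<mu> w) i + Hop \<mu> w i"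
  proof (cases "in_range \<mu> i")
    case True
    have FE: "Fop \<mu> (Eop \<mu> w) i = of_nat i * (\<mu> - of_nat i + 1) * w i"
    proof (cases i)
      case (Suc j)
      with True have "in_range \<mu> j" using in_range_le by auto
      with True Suc show ?thesis unfolding Fop_def Eop_def by (simp add: algebra_simps)
    qed (simp add: Fop_def)
    have EF: "Eop \<mu> (Fop \<mu> w) i = of_nat (i + 1) * (\<mu> - of_nat i) * w i"
      using True in_range_Suc_iff[OF True] unfolding Fop_def Eop_def by (cases "in_range \<mu> (Suc i)") auto
    show ?thesis unfolding FE EF using True unfolding Hop_def by (simp add: algebra_simps)
  qed (simp add: Hop_def Fop_def Eop_def)
qed

lemma Eop_Hop: "Eop \<mu> (Hop \<mu> w) = (\<lambda>i. Hop \<mu> (Eop \<mu> w) i - 2 * Eop \<mu> w i)"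
proof
  fix i
  show "Eop \<mu> (Hop \<mu> w) i = Hop \<mu> (Eop \<mu> w) i - 2 * Eop \<mu> w i"
  proof (cases "in_range \<mu> i")
    case True
    then show ?thesis using in_range_Suc_iff[OF True] unfolding Hop_def Eop_def
      by (cases "in_range \<mu> (Suc i)") (auto simp: algebra_simps)
  qed (simp add: Hop_def Eop_def)
qed

lemma Vcarrier_Eop: "v \<in> Vcarrier \<mu> \<Longrightarrow> Eop \<mu> v \<in> Vcarrier \<mu>"
proof -
  assume v: "v \<in> Vcarrier \<mu>"
  have "{i. Eop \<mu> v i \<noteq> 0} \<subseteq> Suc -` {i. v i \<noteq> 0}" unfolding Eop_def by auto
  moreover have "finite (Suc -` {i. v i \<noteq> 0})"
    using v unfolding Vcarrier_def by (intro finite_vimageI) auto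
  ultimately show ?thesis unfolding Vcarrier_def by (auto simp: Eop_def intro: finite_subset)
qed

lemma Vcarrier_Fop: "v \<in> Vcarrier \<mu> \<Longrightarrow> Fop \<mu> v \<in> Vcarrier \<mu>"
proof -
  assume v: "v \<in> Vcarrier \<mu>"
  have "{i. Fop \<mu> v i \<noteq> 0} \<subseteq> Suc ` {i. v i \<noteq> 0}"
    unfolding Fop_def by (auto split: if_splits intro!: image_eqI[of _ _ "_ - 1"])
  moreover have "finite (Suc ` {i. v i \<noteq> 0})" using v unfolding Vcarrier_def by auto
  ultimately have "finite {i. Fop \<mu> v i \<noteq> 0}" by (rule finite_subset)
  then show ?thesis unfolding Vcarrier_def by (simp add: Fop_def)
qed

lemma Vcarrier_Hop: "v \<in> Vcarrier \<mu> \<Longrightarrow> Hop \<mu> v \<in> Vcarrier \<mu>"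
proof -
  assume v: "v \<in> Vcarrier \<mu>"
  have "{i. Hop \<mu> v i \<noteq> 0} \<subseteq> {i. v i \<noteq> 0}" unfolding Hop_def by auto
  with v show ?thesis unfolding Vcarrier_def by (auto simp: Hop_def intro: finite_subset)
qed

lemma Vcarrier_funpow:
  "(\<And>v. v \<in> Vcarrier \<mu> \<Longrightarrow> G v \<in> Vcarrier \<mu>) \<Longrightarrow> v \<in> Vcarrier \<mu> \<Longrightarrow> (G ^^ n) v \<in> Vcarrier \<mu>"
  by (induction n) auto

lemma Vcarrier_sum:
  assumes "finite S" "\<And>m. m \<in> S \<Longrightarrow> w m \<in> Vcarrier \<mu>"
  shows "(\<lambda>i. \<Sum>m\<in>S. d m * w m i) \<in> Vcarrier \<mu>"
proof -
  have "{i. (\<Sum>m\<in>S. d m * w m i) \<noteq> 0} \<subseteq> (\<Union>m\<in>S. {i. w m i \<noteq> 0})"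
  proof
    fix i
    assume "i \<in> {i. (\<Sum>m\<in>S. d m * w m i) \<noteq> 0}"
    then obtain m where "m \<in> S" "d m * w m i \<noteq> 0"
      by (auto elim: sum.not_neutral_contains_not_neutral)
    then show "i \<in> (\<Union>m\<in>S. {i. w m i \<noteq> 0})" by auto
  qed
  moreover have "finite (\<Union>m\<in>S. {i. w m i \<noteq> 0})" using assms unfolding Vcarrier_def by auto
  ultimately show ?thesis using assms unfolding Vcarrier_def by (auto intro: finite_subset)
qed

definition hw_vec :: "nat \<Rightarrow> complex" where
  "hw_vec = (\<lambda>i. if i = 0 then 1 else 0)"

lemma hw_vec_Vcarrier: "hw_vec \<in> Vcarrier \<mu>"
  unfolding Vcarrier_def hw_vec_def by auto

lemma Hop_hw_vec: "Hop \<mu> hw_vec = (\<lambda>i. \<mu> * hw_vec i)"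
  unfolding Hop_def hw_vec_def by auto

lemma Eop_hw_vec: "Eop \<mu> hw_vec = (\<lambda>i. 0)"
  unfolding Eop_def hw_vec_def by auto

lemma Fop_funpow_hw_vec: "(Fop \<mu> ^^ n) hw_vec = (\<lambda>j. if j = n \<and> in_range \<mu> n then 1 else 0)"
proof (induction n)
  case (Suc n)
  show ?case
  proof
    fix j
    show "(Fop \<mu> ^^ Suc n) hw_vec j = (if j = Suc n \<and> in_range \<mu> (Suc n) then 1 else 0)"
      unfolding funpow.simps comp_def Suc.IH using in_range_le[of \<mu> "Suc n" n] by (auto simp: Fop_def)
  qed
qed (auto simp: hw_vec_def)

lemma Hop_eigen_above_highest:
  assumes v: "v \<in> Vcarrier \<mu>" and H: "Hop \<mu> v = (\<lambda>i. (\<mu> + of_nat k) * v i)" and k: "k > 0"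
  shows "v = (\<lambda>i. 0)"
proof
  fix j
  show "v j = 0"
  proof (cases "in_range \<mu> j")
    case True
    then have "(\<mu> - 2 * of_nat j) * v j = (\<mu> + of_nat k) * v j"
      using fun_cong[OF H, of j] unfolding Hop_def by simp
    then have "(of_nat (2 * j + k) :: complex) * v j = 0" by (simp add: algebra_simps)
    with k show ?thesis by (simp only: mult_eq_0_iff of_nat_eq_0_iff) simp
  qed (use v in \<open>auto simp: Vcarrier_def\<close>)
qed

lemma Eop_kernel_below_highest:
  assumes v: "v \<in> Vcarrier \<mu>" and E: "Eop \<mu> v = (\<lambda>i. 0)"
    and H: "Hop \<mu> v = (\<lambda>i. (\<mu> - 2 * of_nat k) * v i)" and k: "k > 0"
  shows "v = (\<lambda>i. 0)"
proof
  fix j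
  show "v j = 0"
  proof (cases "in_range \<mu> j")
    case True
    show ?thesis
    proof (cases "j = k")
      case False
      from True have "(\<mu> - 2 * of_nat j) * v j = (\<mu> - 2 * of_nat k) * v j"
        using fun_cong[OF H, of j] unfolding Hop_def by simp
      then have "(2 * of_nat k - 2 * of_nat j :: complex) * v j = 0" by (simp add: algebra_simps)
      with False show ?thesis by simp
    next
      case True
      from k obtain l where l: "k = Suc l" by (cases k) auto
      with \<open>in_range \<mu> j\<close> True have "in_range \<mu> l" "\<mu> \<noteq> of_nat l"
        using in_range_le[of \<mu> j l] unfolding in_range_def by auto
      moreover have "Eop \<mu> v l = 0" using E by simp
      ultimately show ?thesis using True l unfolding Eop_def by (simp del: of_nat_Suc)
    qed
  qed (use v in \<open>auto simp: Vcarrier_def\<close>)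
qed

definition pbw_op :: "complex \<Rightarrow> nat \<times> nat \<times> nat \<Rightarrow> (nat \<Rightarrow> complex) \<Rightarrow> (nat \<Rightarrow> complex)" where
  "pbw_op \<mu> m = (case m of (a, b, c) \<Rightarrow> (\<lambda>v. (Fop \<mu> ^^ a) ((Hop \<mu> ^^ b) ((Eop \<mu> ^^ c) v))))"

lemma pbw_op_Suc_f: "pbw_op \<mu> (Suc a, b, c) v = Fop \<mu> (pbw_op \<mu> (a, b, c) v)"
  unfolding pbw_op_def by simp

lemma pbw_op_Suc_h: "pbw_op \<mu> (0, Suc b, c) v = Hop \<mu> (pbw_op \<mu> (0, b, c) v)"
  unfolding pbw_op_def by simp

lemma pbw_op_Suc_e: "pbw_op \<mu> (0, 0, Suc c) v = Eop \<mu> (pbw_op \<mu> (0, 0, c) v)"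
  unfolding pbw_op_def by simp

lemma pbw_op_Vcarrier: "v \<in> Vcarrier \<mu> \<Longrightarrow> pbw_op \<mu> m v \<in> Vcarrier \<mu>"
  unfolding pbw_op_def
  by (cases m) (auto intro!: Vcarrier_funpow Vcarrier_Eop Vcarrier_Fop Vcarrier_Hop)

section \<open>The action of U(sl2) on V(\<mu>)\<close>

locale Usl2 =
  fixes sc :: "complex \<Rightarrow> 'a::ring_1" and e f h :: 'a
  assumes is_Usl2: "is_Usl2 sc e f h"
begin

abbreviation pbw :: "nat \<times> nat \<times> nat \<Rightarrow> 'a" where
  "pbw \<equiv> pbw_mono e f h"

lemma sc_add: "sc (a + b) = sc a + sc b"
  and sc_mult: "sc (a * b) = sc a * sc b"
  and sc_one: "sc 1 = 1"
  and sc_comm: "sc a * x = x * sc a"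
  using is_Usl2 unfolding is_Usl2_def by blast+

lemma e_f_commute: "e * f = f * e + h"
  and h_e_commute: "h * e = e * h + 2 * e"
  and h_f_commute: "h * f = f * h - 2 * f"
proof -
  have "e * f - f * e = h" "h * e - e * h = 2 * e" "h * f - f * h = - (2 * f)"
    using is_Usl2 unfolding is_Usl2_def by blast+
  then show "e * f = f * e + h" "h * e = e * h + 2 * e" "h * f = f * h - 2 * f"
    by (simp_all add: algebra_simps)
qed

lemma sc_zero [simp]: "sc 0 = 0"
  using sc_add[of 0 0] by simp

lemma sc_diff: "sc (a - b) = sc a - sc b"
  using sc_add[of "a - b" b] by (simp add: algebra_simps)

lemma sc_minus: "sc (- a) = - sc a"
  using sc_diff[of 0 a] by simp

lemma sc_two: "sc 2 = 2"
  using sc_add[of 1 1] by (simp add: sc_one)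

lemma mult_sc_left: "x * (sc a * y) = sc a * (x * y)"
  by (metis mult.assoc sc_comm)

lemma pbw_independent:
  "finite {m. c m \<noteq> 0} \<Longrightarrow> (\<Sum>m | c m \<noteq> 0. sc (c m) * pbw m) = 0 \<Longrightarrow> c m = 0"
  using is_Usl2 unfolding is_Usl2_def by blast

lemma pbw_sum_eq_zeroD:
  assumes A: "finite A" and "(\<Sum>m\<in>A. sc (d m) * pbw m) = 0" and m: "m \<in> A"
  shows "d m = 0"
proof -
  define d' where "d' m = (if m \<in> A then d m else 0)" for m
  have supp: "{m. d' m \<noteq> 0} \<subseteq> A" unfolding d'_def by auto
  have "(\<Sum>m | d' m \<noteq> 0. sc (d' m) * pbw m) = (\<Sum>m\<in>A. sc (d m) * pbw m)"
    by (rule sum.mono_neutral_cong_left) (use A supp in \<open>auto simp: d'_def\<close>)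
  with assms(2) have "d' m = 0"
    by (intro pbw_independent[OF finite_subset[OF supp A]]) simp
  with m show ?thesis unfolding d'_def by simp
qed

definition coord :: "'a \<Rightarrow> nat \<times> nat \<times> nat \<Rightarrow> complex" where
  "coord x = (SOME c. finite {m. c m \<noteq> 0} \<and> x = (\<Sum>m | c m \<noteq> 0. sc (c m) * pbw m))"

lemma finite_coord: "finite {m. coord x m \<noteq> 0}"
  and coord_expansion: "x = (\<Sum>m | coord x m \<noteq> 0. sc (coord x m) * pbw m)"
proof -
  have "\<exists>c. finite {m. c m \<noteq> 0} \<and> x = (\<Sum>m | c m \<noteq> 0. sc (c m) * pbw m)"
    using is_Usl2 unfolding is_Usl2_def by blast
  from someI_ex[OF this] show "finite {m. coord x m \<noteq> 0}"
    "x = (\<Sum>m | coord x m \<noteq> 0. sc (coord x m) * pbw m)" unfolding coord_def by blast+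
qed

lemma pbw_spanning: "\<exists>S c. finite S \<and> x = (\<Sum>m\<in>S. sc (c m) * pbw m)"
  using finite_coord coord_expansion by blast

lemma coord_unique:
  assumes S: "finite S" and x: "x = (\<Sum>m\<in>S. sc (d m) * pbw m)"
  shows "coord x m = (if m \<in> S then d m else 0)"
proof -
  define C where "C = {m. coord x m \<noteq> 0}"
  define A where "A = S \<union> C \<union> {m}"
  define d' where "d' m = (if m \<in> S then d m else 0)" for m
  have A: "finite A" unfolding A_def C_def using S finite_coord by simp
  have "x = (\<Sum>m\<in>A. sc (coord x m) * pbw m)"
    by (subst coord_expansion) (rule sum.mono_neutral_left, use A in \<open>auto simp: A_def C_def\<close>)
  moreover have "x = (\<Sum>m\<in>A. sc (d' m) * pbw m)"
    unfolding x by (rule sum.mono_neutral_cong_left) (use A in \<open>auto simp: A_def d'_def\<close>)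
  ultimately have "(\<Sum>m\<in>A. sc (d' m - coord x m) * pbw m) = 0"
    by (simp add: sc_diff left_diff_distrib sum_subtractf)
  from pbw_sum_eq_zeroD[OF A this] show ?thesis unfolding A_def d'_def by auto
qed

text \<open>Since the PBW monomials form a basis, letting f^a h^b e^c act as the composite of Fop, Hop
  and Eop defines a linear map; the commutation relations of these operators make it an action.\<close>

definition Vact :: "complex \<Rightarrow> 'a \<Rightarrow> (nat \<Rightarrow> complex) \<Rightarrow> (nat \<Rightarrow> complex)" where
  "Vact \<mu> x v = (\<lambda>i. \<Sum>m | coord x m \<noteq> 0. coord x m * pbw_op \<mu> m v i)"

lemma Vact_pbw_sum:
  assumes S: "finite S"
  shows "Vact \<mu> (\<Sum>m\<in>S. sc (d m) * pbw m) v = (\<lambda>i. \<Sum>m\<in>S. d m * pbw_op \<mu> m v i)"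
proof
  fix i
  let ?x = "\<Sum>m\<in>S. sc (d m) * pbw m"
  have "{m. coord ?x m \<noteq> 0} \<subseteq> S" using coord_unique[OF S refl] by auto
  then show "Vact \<mu> ?x v i = (\<Sum>m\<in>S. d m * pbw_op \<mu> m v i)"
    unfolding Vact_def using coord_unique[OF S refl]
    by (intro sum.mono_neutral_cong_left) (auto simp: S)
qed

lemma Vact_pbw: "Vact \<mu> (pbw m) = pbw_op \<mu> m"
  using Vact_pbw_sum[where S = "{m}" and d = "\<lambda>_. 1"] by (auto simp: sc_one)

lemma Vact_add: "Vact \<mu> (x + y) v = (\<lambda>i. Vact \<mu> x v i + Vact \<mu> y v i)"
proof -
  obtain S c where S: "finite S" "x = (\<Sum>m\<in>S. sc (c m) * pbw m)" using pbw_spanning by blast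
  obtain S' c' where S': "finite S'" "y = (\<Sum>m\<in>S'. sc (c' m) * pbw m)" using pbw_spanning by blast
  define cx where "cx m = (if m \<in> S then c m else 0)" for m
  define cy where "cy m = (if m \<in> S' then c' m else 0)" for m
  have fin: "finite (S \<union> S')" using S S' by simp
  have x: "x = (\<Sum>m\<in>S \<union> S'. sc (cx m) * pbw m)"
    unfolding S by (rule sum.mono_neutral_cong_left) (use S(1) S'(1) in \<open>auto simp: cx_def\<close>)
  have y: "y = (\<Sum>m\<in>S \<union> S'. sc (cy m) * pbw m)"
    unfolding S' by (rule sum.mono_neutral_cong_left) (use S(1) S'(1) in \<open>auto simp: cy_def\<close>)
  have xy: "x + y = (\<Sum>m\<in>S \<union> S'. sc (cx m + cy m) * pbw m)"
    unfolding x y by (simp add: sc_add algebra_simps sum.distrib)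
  show ?thesis
    unfolding xy by (simp add: x y Vact_pbw_sum[OF fin] algebra_simps sum.distrib)
qed

lemma Vact_sc_mult: "Vact \<mu> (sc a * x) v = (\<lambda>i. a * Vact \<mu> x v i)"
proof -
  obtain S c where S: "finite S" "x = (\<Sum>m\<in>S. sc (c m) * pbw m)" using pbw_spanning by blast
  have ax: "sc a * x = (\<Sum>m\<in>S. sc (a * c m) * pbw m)"
    unfolding S by (simp add: sum_distrib_left sc_mult mult.assoc)
  show ?thesis
    unfolding ax by (simp add: S(2) Vact_pbw_sum[OF S(1)] sum_distrib_left mult.assoc)
qed

lemma Vact_zero: "Vact \<mu> 0 v = (\<lambda>i. 0)"
  using Vact_sc_mult[of \<mu> 0 0] by simp

lemma Vact_diff: "Vact \<mu> (x - y) v = (\<lambda>i. Vact \<mu> x v i - Vact \<mu> y v i)"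
  using Vact_add[of \<mu> "x - y" y v] by (simp add: fun_eq_iff)

lemma Vact_two_mult: "Vact \<mu> (2 * x) v = (\<lambda>i. 2 * Vact \<mu> x v i)"
  using Vact_sc_mult[of \<mu> 2 x] by (simp add: sc_two)

lemma Vact_sum: "Vact \<mu> (\<Sum>m\<in>S. sc (d m) * z m) v = (\<lambda>i. \<Sum>m\<in>S. d m * Vact \<mu> (z m) v i)"
  by (induction S rule: infinite_finite_induct) (simp_all add: Vact_zero Vact_add Vact_sc_mult)

lemma Vact_left_mult:
  assumes G: "seq_linear G" and z: "\<And>m v. Vact \<mu> (z * pbw m) v = G (pbw_op \<mu> m v)"
  shows "Vact \<mu> (z * y) v = G (Vact \<mu> y v)"
proof -
  obtain S c where S: "finite S" "y = (\<Sum>m\<in>S. sc (c m) * pbw m)" using pbw_spanning by blast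
  have zy: "z * y = (\<Sum>m\<in>S. sc (c m) * (z * pbw m))"
    unfolding S(2) by (simp add: sum_distrib_left mult_sc_left)
  show ?thesis
    by (simp only: zy Vact_sum z) (simp add: S(2) Vact_pbw_sum[OF S(1)] seq_linear_sum[OF G S(1)])
qed

lemma f_mult_pbw: "f * pbw (a, b, c) = pbw (Suc a, b, c)"
  and h_mult_pbw: "h * pbw (0, b, c) = pbw (0, Suc b, c)"
  and e_mult_pbw: "e * pbw (0, 0, c) = pbw (0, 0, Suc c)"
  unfolding pbw_mono_def by (simp_all add: mult.assoc)

lemma Vact_f_mult: "Vact \<mu> (f * y) v = Fop \<mu> (Vact \<mu> y v)"
  by (rule Vact_left_mult[OF seq_linear_Fop]) (auto simp: f_mult_pbw Vact_pbw pbw_op_Suc_f)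

lemma Vact_h_mult_pbw: "Vact \<mu> (h * pbw (a, b, c)) v = Hop \<mu> (pbw_op \<mu> (a, b, c) v)"
proof (induction a arbitrary: v)
  case 0
  then show ?case by (simp add: h_mult_pbw Vact_pbw pbw_op_Suc_h)
next
  case (Suc a)
  have "h * pbw (Suc a, b, c) = f * (h * pbw (a, b, c)) - 2 * (f * pbw (a, b, c))"
    unfolding f_mult_pbw[symmetric] mult.assoc[symmetric] h_f_commute by (simp add: algebra_simps)
  then show ?case
    by (simp add: Vact_diff Vact_two_mult Vact_f_mult Suc Vact_pbw pbw_op_Suc_f Hop_Fop)
qed

lemma Vact_h_mult: "Vact \<mu> (h * y) v = Hop \<mu> (Vact \<mu> y v)"
  by (rule Vact_left_mult[OF seq_linear_Hop]) (auto simp: Vact_h_mult_pbw)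

lemma Vact_e_mult_pbw: "Vact \<mu> (e * pbw (a, b, c)) v = Eop \<mu> (pbw_op \<mu> (a, b, c) v)"
proof (induction a arbitrary: v)
  case 0
  show ?case
  proof (induction b arbitrary: v)
    case 0
    then show ?case by (simp add: e_mult_pbw Vact_pbw pbw_op_Suc_e)
  next
    case (Suc b)
    have "e * pbw (0, Suc b, c) = h * (e * pbw (0, b, c)) - 2 * (e * pbw (0, b, c))"
      unfolding h_mult_pbw[symmetric] mult.assoc[symmetric] h_e_commute by (simp add: algebra_simps)
    then show ?case
      by (simp add: Vact_diff Vact_two_mult Vact_h_mult Suc pbw_op_Suc_h Eop_Hop)
  qed
next
  case (Suc a)
  have "e * pbw (Suc a, b, c) = f * (e * pbw (a, b, c)) + h * pbw (a, b, c)"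
    unfolding f_mult_pbw[symmetric] mult.assoc[symmetric] e_f_commute by (simp add: algebra_simps)
  then show ?case
    by (simp add: Vact_add Vact_f_mult Vact_h_mult Suc Vact_pbw pbw_op_Suc_f Eop_Fop)
qed

lemma Vact_e_mult: "Vact \<mu> (e * y) v = Eop \<mu> (Vact \<mu> y v)"
  by (rule Vact_left_mult[OF seq_linear_Eop]) (auto simp: Vact_e_mult_pbw)

lemma Vact_pbw_mult: "Vact \<mu> (pbw m * y) v = pbw_op \<mu> m (Vact \<mu> y v)"
proof -
  obtain a b c where m: "m = (a, b, c)" by (cases m)
  have "Vact \<mu> (pbw (a, b, c) * y) v = pbw_op \<mu> (a, b, c) (Vact \<mu> y v)" for v
  proof (induction a arbitrary: v)
    case 0
    show ?case
    proof (induction b arbitrary: v)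
      case 0
      show ?case
      proof (induction c arbitrary: v)
        case 0
        have "pbw (0, 0, 0) = 1" unfolding pbw_mono_def by simp
        then show ?case by (simp add: pbw_op_def)
      next
        case (Suc c)
        then show ?case
          by (simp add: e_mult_pbw[symmetric] mult.assoc Vact_e_mult pbw_op_Suc_e)
      qed
    next
      case (Suc b)
      then show ?case
        by (simp add: h_mult_pbw[symmetric] mult.assoc Vact_h_mult pbw_op_Suc_h)
    qed
  next
    case (Suc a)
    then show ?case
      by (simp add: f_mult_pbw[symmetric] mult.assoc Vact_f_mult pbw_op_Suc_f)
  qed
  then show ?thesis unfolding m .
qed

lemma Vact_mult: "Vact \<mu> (x * y) v = Vact \<mu> x (Vact \<mu> y v)"
proof -
  obtain S c where S: "finite S" "x = (\<Sum>m\<in>S. sc (c m) * pbw m)" using pbw_spanning by blast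
  have xy: "x * y = (\<Sum>m\<in>S. sc (c m) * (pbw m * y))"
    unfolding S(2) by (simp add: sum_distrib_right mult.assoc)
  show ?thesis
    by (simp only: xy Vact_sum Vact_pbw_mult) (simp add: S(2) Vact_pbw_sum[OF S(1)])
qed

lemma Vact_one: "Vact \<mu> 1 v = v"
  using Vact_pbw[of \<mu> "(0, 0, 0)"] unfolding pbw_mono_def by (simp add: pbw_op_def)

lemma Vact_power: "Vact \<mu> (x ^ n) v = (Vact \<mu> x ^^ n) v"
  by (induction n arbitrary: v) (simp_all add: Vact_one Vact_mult)

lemma Vact_sc: "Vact \<mu> (sc c) v = (\<lambda>i. c * v i)"
  using Vact_sc_mult[of \<mu> c 1] by (simp add: Vact_one)

lemma Vact_generators: "Vact \<mu> e = Eop \<mu>" "Vact \<mu> f = Fop \<mu>" "Vact \<mu> h = Hop \<mu>"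
  using Vact_e_mult[of \<mu> 1] Vact_f_mult[of \<mu> 1] Vact_h_mult[of \<mu> 1] by (auto simp: Vact_one)

lemma is_Vrep_Vact: "is_Vrep sc e f h \<mu> (Vact \<mu>)"
  unfolding is_Vrep_def by (auto simp: Vact_mult Vact_add Vact_sc Vact_generators intro!: ext)

lemma is_Vrep_unique:
  assumes \<rho>: "is_Vrep sc e f h \<mu> \<rho>"
  shows "\<rho> = Vact \<mu>"
proof (intro ext)
  fix x v i
  have mult: "\<rho> (x * y) = (\<lambda>v. \<rho> x (\<rho> y v))" and add: "\<rho> (x + y) = (\<lambda>v i. \<rho> x v i + \<rho> y v i)"
    and scal: "\<rho> (sc c) = (\<lambda>v i. c * v i)" and gens: "\<rho> e = Eop \<mu>" "\<rho> f = Fop \<mu>" "\<rho> h = Hop \<mu>"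
    for x y c using \<rho> unfolding is_Vrep_def by blast+
  have pow: "\<rho> (x ^ n) v = (\<rho> x ^^ n) v" for x n v
    by (induction n arbitrary: v) (simp_all add: mult scal[of 1, unfolded sc_one])
  have pbw: "\<rho> (pbw m) = pbw_op \<mu> m" for m
    by (cases m) (simp add: pbw_mono_def pbw_op_def mult pow gens fun_eq_iff)
  have sum: "\<rho> (\<Sum>m\<in>S. sc (d m) * pbw m) v i = (\<Sum>m\<in>S. d m * pbw_op \<mu> m v i)" for S d
    by (induction S rule: infinite_finite_induct)
      (simp_all add: add mult scal pbw scal[of 0, simplified])
  obtain S c where S: "finite S" "x = (\<Sum>m\<in>S. sc (c m) * pbw m)" using pbw_spanning by blast
  show "\<rho> x v i = Vact \<mu> x v i" unfolding S(2) sum Vact_pbw_sum[OF S(1)] ..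
qed

lemma annihilates_V_iff_Vact:
  "annihilates_V sc e f h Q \<mu> \<longleftrightarrow> (\<forall>v\<in>Vcarrier \<mu>. Vact \<mu> Q v = (\<lambda>_. 0))"
  unfolding annihilates_V_def using is_Vrep_Vact is_Vrep_unique by blast

lemma Vact_Vcarrier: "v \<in> Vcarrier \<mu> \<Longrightarrow> Vact \<mu> x v \<in> Vcarrier \<mu>"
  unfolding Vact_def by (intro Vcarrier_sum finite_coord pbw_op_Vcarrier)

lemma Vact_scale_vec: "Vact \<mu> x (\<lambda>i. c * v i) = (\<lambda>i. c * Vact \<mu> x v i)"
  using Vact_mult[of \<mu> x "sc c" v] Vact_mult[of \<mu> "sc c" x v] sc_comm[of c x] by (simp add: Vact_sc)

lemma Vact_zero_vec: "Vact \<mu> x (\<lambda>i. 0) = (\<lambda>i. 0)"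
  using Vact_scale_vec[of \<mu> x 0 "\<lambda>_. 0"] by simp

lemma Vact_poly_eigen:
  assumes z: "Vact \<mu> z v = (\<lambda>i. l * v i)"
  shows "Vact \<mu> (\<Sum>i\<le>d. sc (a i) * z ^ i) v = (\<lambda>j. (\<Sum>i\<le>d. a i * l ^ i) * v j)"
proof -
  have "Vact \<mu> (z ^ i) v = (\<lambda>j. l ^ i * v j)" for i
  proof (induction i)
    case (Suc i)
    have "Vact \<mu> (z ^ Suc i) v = Vact \<mu> (z ^ i) (Vact \<mu> z v)"
      by (simp only: Vact_mult[symmetric] power_Suc2)
    also have "\<dots> = (\<lambda>j. l * (l ^ i * v j))" unfolding z Vact_scale_vec Suc ..
    finally show ?case by (simp add: mult_ac)
  qed (simp add: Vact_one)
  then show ?thesis by (simp add: Vact_sum sum_distrib_right mult.assoc)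
qed

lemma Vact_evalh_add_mult_e:
  "Vact \<mu> (evalh sc h p + y * e) hw_vec = (\<lambda>j. poly p \<mu> * hw_vec j)"
proof -
  have "Vact \<mu> (evalh sc h p) hw_vec = (\<lambda>j. poly p \<mu> * hw_vec j)"
    unfolding evalh_def poly_altdef by (rule Vact_poly_eigen) (simp add: Vact_generators Hop_hw_vec)
  then show ?thesis
    by (simp add: Vact_add Vact_mult Vact_generators Eop_hw_vec Vact_zero_vec)
qed

lemma Vact_scaled_evalh_add_mult_e:
  assumes "sc a * w = evalh sc h p + y * e" and "a \<noteq> 0"
  shows "Vact \<mu> w hw_vec = (\<lambda>i. poly p \<mu> / a * hw_vec i)"
proof -
  have "(\<lambda>i. a * Vact \<mu> w hw_vec i) = (\<lambda>i. poly p \<mu> * hw_vec i)"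
    using Vact_evalh_add_mult_e[of \<mu> p y] by (simp only: assms(1)[symmetric] Vact_sc_mult)
  with assms(2) show ?thesis by (simp add: fun_eq_iff field_simps)
qed

lemma Vact_f_mult_at_0: "Vact \<mu> (f * z) v 0 = 0"
  by (simp add: Vact_f_mult Fop_def)

lemma Vact_decompose:
  assumes v: "v \<in> Vcarrier \<mu>"
  shows "v = Vact \<mu> (\<Sum>j | v j \<noteq> 0. sc (v j) * f ^ j) hw_vec"
proof
  fix i
  have fin: "finite {j. v j \<noteq> 0}" using v unfolding Vcarrier_def by auto
  have "Vact \<mu> (\<Sum>j | v j \<noteq> 0. sc (v j) * f ^ j) hw_vec i
      = (\<Sum>j | v j \<noteq> 0. v j * (if i = j \<and> in_range \<mu> j then 1 else 0))"
    by (simp add: Vact_sum Vact_power Vact_generators Fop_funpow_hw_vec)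
  also have "\<dots> = (\<Sum>j\<in>{j. v j \<noteq> 0} \<inter> {i}. v j * (if in_range \<mu> j then 1 else 0))"
    using fin by (intro sum.mono_neutral_cong_right) auto
  also have "\<dots> = v i"
    using v unfolding Vcarrier_def by (cases "v i = 0") auto
  finally show "v i = Vact \<mu> (\<Sum>j | v j \<noteq> 0. sc (v j) * f ^ j) hw_vec i" by simp
qed

end

section \<open>The adjoint action\<close>

lemma adj_add: "adj x (u + v) = adj x u + adj x v"
  unfolding adj_def by (simp add: algebra_simps)

lemma adj_zero [simp]: "adj x 0 = 0"
  unfolding adj_def by simp

lemma adj_jacobi: "adj x (adj y w) = adj y (adj x w) + adj (x * y - y * x) w"
  unfolding adj_def by (simp add: algebra_simps)

lemma adj_two_left: "adj (2 * x) w = 2 * adj x w"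
proof -
  have "w * (2 * x) = 2 * (w * x)"
    by (metis mult.assoc mult_of_nat_commute of_nat_numeral)
  then show ?thesis unfolding adj_def by (simp add: right_diff_distrib mult.assoc)
qed

lemma adj_uminus_left: "adj (- x) w = - adj x w"
  unfolding adj_def by (simp add: algebra_simps)

lemma mult_eq_adj_add: "x * w = adj x w + w * x"
  unfolding adj_def by simp

context Usl2
begin

lemma adj_sc_mult: "adj x (sc c * u) = sc c * adj x u"
  unfolding adj_def by (simp add: mult_sc_left right_diff_distrib mult.assoc)

lemma adj_sum: "adj x (\<Sum>i\<in>S. sc (c i) * w i) = (\<Sum>i\<in>S. sc (c i) * adj x (w i))"
  by (induction S rule: infinite_finite_induct) (simp_all add: adj_add adj_sc_mult)

lemma adj_e_adj_f: "adj e (adj f w) = adj f (adj e w) + adj h w"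
  using adj_jacobi[of e f w] e_f_commute by simp

lemma adj_h_adj_f: "adj h (adj f w) = adj f (adj h w) - 2 * adj f w"
  using adj_jacobi[of h f w] h_f_commute by (simp add: adj_uminus_left adj_two_left)

lemma Hop_Vact_weight:
  assumes w: "adj h w = sc l * w"
  shows "Hop \<mu> (Vact \<mu> w hw_vec) = (\<lambda>j. (\<mu> + l) * Vact \<mu> w hw_vec j)"
proof -
  have "Hop \<mu> (Vact \<mu> w hw_vec) = Vact \<mu> (adj h w + w * h) hw_vec"
    by (simp add: Vact_mult Vact_generators mult_eq_adj_add[symmetric])
  also have "\<dots> = (\<lambda>j. l * Vact \<mu> w hw_vec j + \<mu> * Vact \<mu> w hw_vec j)"
    unfolding w by (simp add: Vact_add Vact_sc_mult Vact_mult Vact_sc Vact_generators Hop_hw_vec Vact_scale_vec)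
  finally show ?thesis by (simp add: algebra_simps)
qed

lemma Eop_Vact_hw_vec: "Eop \<mu> (Vact \<mu> w hw_vec) = Vact \<mu> (adj e w) hw_vec"
proof -
  have "Eop \<mu> (Vact \<mu> w hw_vec) = Vact \<mu> (adj e w + w * e) hw_vec"
    by (simp add: Vact_mult Vact_generators mult_eq_adj_add[symmetric])
  then show ?thesis
    by (simp add: Vact_add Vact_mult Vact_generators Eop_hw_vec Vact_zero_vec)
qed

text \<open>The ad(U(g))-module generated by a highest weight vector u is spanned by the string
  of its images under powers of ad f.\<close>

definition ad_f_span :: "'a \<Rightarrow> 'a set" where
  "ad_f_span u = {\<Sum>i<n. sc (c i) * (adj f ^^ i) u | c n. True}"

lemma ad_f_spanI: "r = (\<Sum>i<n. sc (c i) * (adj f ^^ i) u) \<Longrightarrow> r \<in> ad_f_span u"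
  unfolding ad_f_span_def by blast

lemma ad_f_spanE:
  assumes "r \<in> ad_f_span u"
  obtains c n where "r = (\<Sum>i<n. sc (c i) * (adj f ^^ i) u)"
  using assms unfolding ad_f_span_def by blast

lemma self_in_ad_f_span: "u \<in> ad_f_span u"
  by (rule ad_f_spanI[where n = 1 and c = "\<lambda>_. 1"]) (simp add: sc_one)

lemma ad_f_span_subset_ad_span:
  assumes "u \<in> ad_span sc e f h Q"
  shows "ad_f_span u \<subseteq> ad_span sc e f h Q"
proof
  fix r
  assume "r \<in> ad_f_span u"
  then obtain c n where r: "r = (\<Sum>i<n. sc (c i) * (adj f ^^ i) u)" by (rule ad_f_spanE)
  have "(adj f ^^ i) u \<in> ad_span sc e f h Q" for i
    by (induction i) (simp_all add: assms ad_span.ad_f)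
  then show "r \<in> ad_span sc e f h Q"
    unfolding r by (induction n) (simp_all add: ad_span.zero ad_span.add ad_span.smult)
qed

lemma adj_h_adj_f_power:
  assumes u: "adj h u = sc \<nu> * u"
  shows "adj h ((adj f ^^ i) u) = sc (\<nu> - 2 * of_nat i) * (adj f ^^ i) u"
proof (induction i)
  case (Suc i)
  have "adj h ((adj f ^^ Suc i) u) = sc (\<nu> - 2 * of_nat i) * (adj f ^^ Suc i) u - sc 2 * (adj f ^^ Suc i) u"
    by (simp add: adj_h_adj_f Suc adj_sc_mult sc_two)
  also have "\<dots> = sc (\<nu> - 2 * of_nat (Suc i)) * (adj f ^^ Suc i) u"
    by (simp only: left_diff_distrib[symmetric] sc_diff[symmetric]) (simp add: algebra_simps)
  finally show ?case .
qed (simp add: u)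

lemma adj_e_adj_f_power:
  assumes ue: "adj e u = 0" and uh: "adj h u = sc \<nu> * u"
  shows "adj e ((adj f ^^ Suc i) u) = sc (of_nat (Suc i) * (\<nu> - of_nat i)) * (adj f ^^ i) u"
proof (induction i)
  case (Suc i)
  have step: "(adj f ^^ Suc k) u = adj f ((adj f ^^ k) u)" for k by simp
  have "adj e ((adj f ^^ Suc (Suc i)) u)
      = sc (of_nat (Suc i) * (\<nu> - of_nat i)) * (adj f ^^ Suc i) u
        + sc (\<nu> - 2 * of_nat (Suc i)) * (adj f ^^ Suc i) u"
    unfolding step[of "Suc i"] adj_e_adj_f Suc adj_h_adj_f_power[OF uh] adj_sc_mult
      step[of i, symmetric] ..
  also have "\<dots> = sc (of_nat (Suc (Suc i)) * (\<nu> - of_nat (Suc i))) * (adj f ^^ Suc i) u"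
    by (simp only: sc_add[symmetric] distrib_right[symmetric]) (simp add: algebra_simps)
  finally show ?case .
qed (simp add: adj_e_adj_f ue uh)

lemma sum_lessThan_pad:
  assumes "n \<le> (n' :: nat)"
  shows "(\<Sum>i<n. sc (c i) * w i) = (\<Sum>i<n'. sc (if i < n then c i else 0) * w i)"
  using assms by (intro sum.mono_neutral_cong_left) auto

lemma ad_submodule_ad_f_span:
  assumes ue: "adj e u = 0" and uh: "adj h u = sc \<nu> * u"
  shows "ad_submodule sc e f h (ad_f_span u)"
  unfolding ad_submodule_def
proof (intro conjI ballI allI)
  show "0 \<in> ad_f_span u" by (rule ad_f_spanI[where n = 0]) simp
next
  fix x y
  assume "x \<in> ad_f_span u" "y \<in> ad_f_span u"
  then obtain c n c' n' where x: "x = (\<Sum>i<n. sc (c i) * (adj f ^^ i) u)"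
    and y: "y = (\<Sum>i<n'. sc (c' i) * (adj f ^^ i) u)" by (metis ad_f_spanE)
  let ?m = "max n n'"
  have "x + y = (\<Sum>i<?m. sc ((if i < n then c i else 0) + (if i < n' then c' i else 0)) * (adj f ^^ i) u)"
    unfolding x y sum_lessThan_pad[of n ?m, OF max.cobounded1]
      sum_lessThan_pad[of n' ?m, OF max.cobounded2]
    by (simp add: sc_add distrib_right sum.distrib)
  then show "x + y \<in> ad_f_span u" by (rule ad_f_spanI)
next
  fix a x
  assume "x \<in> ad_f_span u"
  then obtain c n where x: "x = (\<Sum>i<n. sc (c i) * (adj f ^^ i) u)" by (rule ad_f_spanE)
  have "sc a * x = (\<Sum>i<n. sc (a * c i) * (adj f ^^ i) u)"
    unfolding x by (simp add: sum_distrib_left sc_mult mult.assoc)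
  then show "sc a * x \<in> ad_f_span u" by (rule ad_f_spanI)
next
  fix x
  assume "x \<in> ad_f_span u"
  then obtain c n where x: "x = (\<Sum>i<n. sc (c i) * (adj f ^^ i) u)" by (rule ad_f_spanE)
  have "adj h x = (\<Sum>i<n. sc (c i * (\<nu> - 2 * of_nat i)) * (adj f ^^ i) u)"
    unfolding x adj_sum adj_h_adj_f_power[OF uh] by (simp add: sc_mult mult.assoc)
  then show "adj h x \<in> ad_f_span u" by (rule ad_f_spanI)
  have "adj f x = (\<Sum>i<Suc n. sc (if i = 0 then 0 else c (i - 1)) * (adj f ^^ i) u)"
    unfolding x adj_sum sum.lessThan_Suc_shift by simp
  then show "adj f x \<in> ad_f_span u" by (rule ad_f_spanI)
  have "adj e x = (\<Sum>i<n - 1. sc (c (Suc i) * (of_nat (Suc i) * (\<nu> - of_nat i))) * (adj f ^^ i) u)"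
  proof (cases n)
    case (Suc n')
    then show ?thesis
      unfolding x Suc sum.lessThan_Suc_shift adj_sum
      by (simp add: ue adj_add adj_sum adj_sc_mult adj_e_adj_f_power[OF ue uh] sc_mult mult.assoc
          del: funpow.simps)
  qed (simp add: x)
  then show "adj e x \<in> ad_f_span u" by (rule ad_f_spanI)
qed

lemma iso_V_ad_span_eq_ad_f_span:
  assumes "iso_V sc e f h (ad_span sc e f h Q) n"
  obtains u where "adj e u = 0" "adj h u = sc (of_int n) * u" "ad_span sc e f h Q = ad_f_span u"
proof -
  from assms obtain u where u: "u \<in> ad_span sc e f h Q" "u \<noteq> 0" "adj e u = 0"
      "adj h u = sc (of_int n) * u"
    and irreducible: "\<And>W. W \<subseteq> ad_span sc e f h Q \<Longrightarrow> ad_submodule sc e f h W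
        \<Longrightarrow> W = {0} \<or> W = ad_span sc e f h Q"
    unfolding iso_V_def by blast
  have "ad_f_span u \<noteq> {0}" using self_in_ad_f_span[of u] u(2) by auto
  then have "ad_span sc e f h Q = ad_f_span u"
    using irreducible[OF ad_f_span_subset_ad_span[OF u(1)] ad_submodule_ad_f_span[OF u(3,4)]] by simp
  with u(3,4) show thesis by (rule that)
qed

lemma zero_weight_in_ad_f_span:
  assumes uh: "adj h u = sc (2 * of_nat N) * u"
    and r: "r = (\<Sum>i<n. sc (c i) * (adj f ^^ i) u)" and r0: "adj h r = 0"
  shows "\<exists>a. r = sc a * (adj f ^^ N) u"
  using r r0
proof (induction n arbitrary: c r)
  case 0
  then show ?case by (intro exI[of _ 0]) simp
next
  case (Suc n)
  define l :: "nat \<Rightarrow> complex" where "l i = 2 * of_nat N - 2 * of_nat i" for i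
  define r' where "r' = (\<Sum>i<n. sc (c i) * (adj f ^^ i) u)"
  have r: "r = r' + sc (c n) * (adj f ^^ n) u" unfolding Suc.prems(1) r'_def by simp
  have wt: "adj h ((adj f ^^ i) u) = sc (l i) * (adj f ^^ i) u" for i
    unfolding l_def by (rule adj_h_adj_f_power[OF uh])
  show ?case
  proof (cases "n = N")
    case True
    then have "adj h r' = 0" using Suc.prems(2) wt[of N] by (simp add: r adj_add adj_sc_mult l_def)
    from Suc.IH[OF r'_def this] obtain a where "r' = sc a * (adj f ^^ N) u" by blast
    with True show ?thesis unfolding r by (intro exI[of _ "a + c n"]) (simp add: sc_add distrib_right)
  next
    case False
    \<comment> \<open>the top term has nonzero weight, so it is a combination of the lower ones\<close>
    then have ln: "l n \<noteq> 0" by (simp add: l_def)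
    have "(\<Sum>i<n. sc (c i * l i) * (adj f ^^ i) u) + sc (c n * l n) * (adj f ^^ n) u = 0"
      using Suc.prems(2) unfolding r r'_def adj_add adj_sum adj_sc_mult wt
      by (simp add: sc_mult mult.assoc)
    then have eq: "sc (c n * l n) * (adj f ^^ n) u = - (\<Sum>i<n. sc (c i * l i) * (adj f ^^ i) u)"
      by (simp add: eq_neg_iff_add_eq_0 add.commute)
    have "sc (c n) * (adj f ^^ n) u = sc (1 / l n) * (sc (c n * l n) * (adj f ^^ n) u)"
      using ln by (simp add: mult.assoc[symmetric] sc_mult[symmetric])
    also have "\<dots> = - (\<Sum>i<n. sc (c i * l i / l n) * (adj f ^^ i) u)"
      unfolding eq by (simp add: sum_distrib_left mult.assoc[symmetric] sc_mult[symmetric])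
    finally have "r = (\<Sum>i<n. sc (c i - c i * l i / l n) * (adj f ^^ i) u)"
      unfolding r r'_def by (simp add: sc_diff left_diff_distrib sum_subtractf)
    from Suc.IH[OF this Suc.prems(2)] show ?thesis .
  qed
qed

lemma zero_wt_multiple_of_ad_f_power:
  assumes uh: "adj h u = sc (2 * of_nat N) * u" and R: "ad_span sc e f h Q = ad_f_span u"
    and r: "r \<in> zero_wt h (ad_span sc e f h Q)" "r \<noteq> 0"
  obtains a where "a \<noteq> 0" "r = sc a * (adj f ^^ N) u"
proof -
  from r(1) obtain c n where "r = (\<Sum>i<n. sc (c i) * (adj f ^^ i) u)" "adj h r = 0"
    unfolding zero_wt_def R by (auto elim: ad_f_spanE)
  from zero_weight_in_ad_f_span[OF uh this] obtain a where "r = sc a * (adj f ^^ N) u" by blast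
  moreover from this r(2) have "a \<noteq> 0" by auto
  ultimately show thesis by (rule that[rotated])
qed

section \<open>Annihilators of V(\<mu>)\<close>

text \<open>If the zero-weight vector of the string kills the highest weight vector of V(\<mu>), so does
  the whole string: above it the weights exceed \<mu>, below it one would get singular vectors.\<close>

lemma Vact_ad_f_power_hw_vec:
  assumes ue: "adj e u = 0" and uh: "adj h u = sc (2 * of_nat N) * u"
    and top: "Vact \<mu> ((adj f ^^ N) u) hw_vec = (\<lambda>i. 0)"
  shows "Vact \<mu> ((adj f ^^ i) u) hw_vec = (\<lambda>i. 0)"
proof (cases "i < N")
  case True
  have "Hop \<mu> (Vact \<mu> ((adj f ^^ i) u) hw_vec)
      = (\<lambda>j. (\<mu> + (2 * of_nat N - 2 * of_nat i)) * Vact \<mu> ((adj f ^^ i) u) hw_vec j)"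
    by (rule Hop_Vact_weight[OF adj_h_adj_f_power[OF uh]])
  also have "2 * of_nat N - 2 * of_nat i = (of_nat (2 * N - 2 * i) :: complex)"
    using True by (simp add: of_nat_diff)
  finally show ?thesis
    by (rule Hop_eigen_above_highest[OF Vact_Vcarrier[OF hw_vec_Vcarrier]]) (use True in simp)
next
  case False
  then obtain s where i: "i = N + s" by (metis le_iff_add not_less)
  have "Vact \<mu> ((adj f ^^ (N + s)) u) hw_vec = (\<lambda>i. 0)"
  proof (induction s)
    case (Suc s)
    let ?v = "Vact \<mu> ((adj f ^^ (N + Suc s)) u) hw_vec"
    have E: "Eop \<mu> ?v = (\<lambda>i. 0)"
      using Suc by (simp add: Eop_Vact_hw_vec adj_e_adj_f_power[OF ue uh] Vact_sc_mult
          del: funpow.simps)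
    have "Hop \<mu> ?v = (\<lambda>j. (\<mu> + (2 * of_nat N - 2 * of_nat (N + Suc s))) * ?v j)"
      by (rule Hop_Vact_weight[OF adj_h_adj_f_power[OF uh]])
    also have "\<mu> + (2 * of_nat N - 2 * of_nat (N + Suc s)) = \<mu> - 2 * of_nat (Suc s)"
      by (simp add: algebra_simps)
    finally show ?case
      by (rule Eop_kernel_below_highest[OF Vact_Vcarrier[OF hw_vec_Vcarrier] E]) simp
  qed (use top in simp)
  with i show ?thesis by simp
qed

lemma Vact_adj_annihilates:
  assumes "\<forall>v\<in>Vcarrier \<mu>. Vact \<mu> w v = (\<lambda>_. 0)"
  shows "\<forall>v\<in>Vcarrier \<mu>. Vact \<mu> (adj x w) v = (\<lambda>_. 0)"
  using assms Vact_Vcarrier by (simp add: adj_def Vact_diff Vact_mult Vact_zero_vec)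

lemma Vact_ad_span_annihilates:
  assumes Q: "\<forall>v\<in>Vcarrier \<mu>. Vact \<mu> Q v = (\<lambda>_. 0)" and r: "r \<in> ad_span sc e f h Q"
  shows "\<forall>v\<in>Vcarrier \<mu>. Vact \<mu> r v = (\<lambda>_. 0)"
  using r
  by (induction rule: ad_span.induct) (simp_all add: Q Vact_zero Vact_add Vact_sc_mult Vact_adj_annihilates)

lemma Vact_annihilates_of_ad_span_hw_vec:
  assumes R: "\<forall>r\<in>ad_span sc e f h Q. Vact \<mu> r hw_vec = (\<lambda>_. 0)"
  shows "\<forall>v\<in>Vcarrier \<mu>. Vact \<mu> Q v = (\<lambda>_. 0)"
proof
  have Rf: "Vact \<mu> (r * f ^ i) hw_vec = (\<lambda>_. 0)" if "r \<in> ad_span sc e f h Q" for r i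
    using that
  proof (induction i arbitrary: r)
    case (Suc i)
    have "r * f ^ Suc i = f * (r * f ^ i) - adj f r * f ^ i"
      unfolding adj_def by (simp add: left_diff_distrib mult.assoc power_commutes)
    with Suc.IH[OF Suc.prems] Suc.IH[OF ad_span.ad_f[OF Suc.prems]] show ?case
      by (simp add: Vact_diff Vact_f_mult Fop_def)
  qed (use R in simp)
  fix v
  assume "v \<in> Vcarrier \<mu>"
  from Vact_decompose[OF this]
  have "Vact \<mu> Q v = Vact \<mu> Q (Vact \<mu> (\<Sum>j | v j \<noteq> 0. sc (v j) * f ^ j) hw_vec)"
    by (rule arg_cong)
  also have "\<dots> = Vact \<mu> (\<Sum>j | v j \<noteq> 0. sc (v j) * (Q * f ^ j)) hw_vec"
    by (simp add: Vact_mult[symmetric] sum_distrib_left mult_sc_left)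
  finally show "Vact \<mu> Q v = (\<lambda>_. 0)"
    using Rf[OF ad_span.gen] by (simp add: Vact_sum)
qed

lemma annihilates_V_iff_ad_f_power:
  assumes ue: "adj e u = 0" and uh: "adj h u = sc (2 * of_nat N) * u"
    and R: "ad_span sc e f h Q = ad_f_span u"
  shows "annihilates_V sc e f h Q \<mu> \<longleftrightarrow> Vact \<mu> ((adj f ^^ N) u) hw_vec = (\<lambda>_. 0)"
proof
  assume "annihilates_V sc e f h Q \<mu>"
  moreover have "(adj f ^^ N) u \<in> ad_span sc e f h Q"
    unfolding R by (rule ad_f_spanI[where n = "Suc N" and c = "\<lambda>i. if i = N then 1 else 0"])
      (simp add: sc_one if_distrib sum.delta')
  ultimately show "Vact \<mu> ((adj f ^^ N) u) hw_vec = (\<lambda>_. 0)"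
    using Vact_ad_span_annihilates hw_vec_Vcarrier unfolding annihilates_V_iff_Vact by blast
next
  assume "Vact \<mu> ((adj f ^^ N) u) hw_vec = (\<lambda>_. 0)"
  then have "Vact \<mu> r hw_vec = (\<lambda>_. 0)" if "r \<in> ad_span sc e f h Q" for r
    using that unfolding R
    by (auto elim!: ad_f_spanE simp: Vact_sum Vact_ad_f_power_hw_vec[OF ue uh])
  then show "annihilates_V sc e f h Q \<mu>"
    unfolding annihilates_V_iff_Vact by (intro Vact_annihilates_of_ad_span_hw_vec) blast
qed

end

section \<open>The transpose\<close>

locale Usl2_transpose = Usl2 +
  fixes T :: "'a \<Rightarrow> 'a"
  assumes is_transpose: "is_transpose sc e f h T"
begin

lemma T_mult: "T (x * y) = T y * T x"
  and T_add: "T (x + y) = T x + T y"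
  and T_sc: "T (sc c) = sc c"
  and T_e: "T e = - e" and T_f: "T f = - f" and T_h: "T h = - h"
  using is_transpose unfolding is_transpose_def by blast+

lemma T_zero: "T 0 = 0"
  using T_add[of 0 0] by simp

lemma T_uminus: "T (- x) = - T x"
  using T_add[of x "- x"] T_zero by (simp add: eq_neg_iff_add_eq_0 add.commute)

lemma T_diff: "T (x - y) = T x - T y"
  using T_add[of x "- y"] T_uminus[of y] by simp

lemma T_sc_mult: "T (sc c * x) = sc c * T x"
  using T_mult[of "sc c" x] T_sc[of c] sc_comm[of c "T x"] by simp

lemma T_power: "T (x ^ n) = T x ^ n"
  using T_sc[of 1] by (induction n) (simp_all add: sc_one T_mult power_commutes)

lemma T_sum: "T (\<Sum>i\<in>S. g i) = (\<Sum>i\<in>S. T (g i))"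
  by (induction S rule: infinite_finite_induct) (simp_all add: T_zero T_add)

lemma T_T: "T (T x) = x"
proof -
  obtain S c where S: "x = (\<Sum>m\<in>S. sc (c m) * pbw m)" using pbw_spanning by blast
  have "T (T (pbw m)) = pbw m" for m
    by (cases m) (simp add: pbw_mono_def T_mult T_power T_e T_f T_h T_uminus)
  then show ?thesis unfolding S by (simp add: T_sum T_sc_mult)
qed

lemma T_adj_generators: "T (adj e u) = adj e (T u)" "T (adj f u) = adj f (T u)" "T (adj h u) = adj h (T u)"
  unfolding adj_def by (simp_all add: T_diff T_mult T_e T_f T_h algebra_simps)

lemma T_ad_span: "u \<in> ad_span sc e f h (T Q) \<Longrightarrow> T u \<in> ad_span sc e f h Q"
  by (induction rule: ad_span.induct)
    (simp_all add: T_T T_zero T_add T_sc_mult T_adj_generators ad_span.intros)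

lemma T_zero_wt: "u \<in> zero_wt h (ad_span sc e f h (T Q)) \<Longrightarrow> T u \<in> zero_wt h (ad_span sc e f h Q)"
  unfolding zero_wt_def using T_ad_span by (auto simp: T_adj_generators[symmetric] T_zero)

lemma Vact_T_evalh_add_mult_f_at_0: "Vact \<mu> (T (evalh sc h p + y * f)) hw_vec 0 = poly p (- \<mu>)"
proof -
  have minus_h: "Vact \<mu> (- h) hw_vec = (\<lambda>i. - \<mu> * hw_vec i)"
    using Vact_sc_mult[of \<mu> "- 1" h] by (simp add: sc_minus sc_one Vact_generators Hop_hw_vec)
  have "Vact \<mu> (\<Sum>i\<le>degree p. sc (coeff p i) * (- h) ^ i) hw_vec 0 = poly p (- \<mu>)"
    unfolding Vact_poly_eigen[OF minus_h] poly_altdef by (simp add: hw_vec_def)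
  moreover have "T (evalh sc h p + y * f) = (\<Sum>i\<le>degree p. sc (coeff p i) * (- h) ^ i) - f * T y"
    unfolding evalh_def T_add T_sum T_sc_mult by (simp add: T_power T_mult T_h T_f)
  ultimately show ?thesis by (simp add: Vact_diff Vact_f_mult_at_0)
qed

end

theorem lemma3p5:
  fixes sc :: "complex \<Rightarrow> 'a::ring_1" and e f h Q u1 u2 :: 'a and T :: "'a \<Rightarrow> 'a"
    and p q :: int and p1 p2 :: "complex poly" and \<mu> :: complex
  assumes U: "is_Usl2 sc e f h"
    and T: "is_transpose sc e f h T"
    and adm: "admissible p q"
    and R: "iso_V sc e f h (ad_span sc e f h Q) (2 * (2 * q + p - 1))"
    and RT: "iso_V sc e f h (ad_span sc e f h (T Q)) (2 * (2 * q + p - 1))"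
    and u1: "u1 \<in> zero_wt h (ad_span sc e f h Q)" "u1 \<noteq> 0"
    and u2: "u2 \<in> zero_wt h (ad_span sc e f h (T Q))" "u2 \<noteq> 0"
    and p1: "\<exists>y. u1 = evalh sc h p1 + y * e"
    and p2: "\<exists>y. u2 = evalh sc h p2 + y * f"
  shows "(annihilates_V sc e f h Q \<mu> \<longleftrightarrow> poly p1 \<mu> = 0)
       \<and> (poly p1 \<mu> = 0 \<longleftrightarrow> poly p2 (- \<mu>) = 0)"
proof -
  interpret Usl2_transpose sc e f h T
    by (intro Usl2_transpose.intro Usl2.intro Usl2_transpose_axioms.intro U T)
  define N where "N = nat (2 * q + p - 1)"
  have "of_int (2 * (2 * q + p - 1)) = 2 * (of_nat N :: complex)"
    using adm unfolding admissible_def N_def by simp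
  with R obtain u where ue: "adj e u = 0" and uh: "adj h u = sc (2 * of_nat N) * u"
    and R_eq: "ad_span sc e f h Q = ad_f_span u"
    by (metis iso_V_ad_span_eq_ad_f_span)
  obtain a where a: "a \<noteq> 0" "u1 = sc a * (adj f ^^ N) u"
    using zero_wt_multiple_of_ad_f_power[OF uh R_eq u1] .
  have "T u2 \<noteq> 0" using u2(2) T_T[of u2] T_zero by auto
  then obtain b where b: "b \<noteq> 0" "T u2 = sc b * (adj f ^^ N) u"
    using zero_wt_multiple_of_ad_f_power[OF uh R_eq T_zero_wt[OF u2(1)]] by blast
  from p1 p2 obtain y1 y2 where y: "u1 = evalh sc h p1 + y1 * e" "u2 = evalh sc h p2 + y2 * f"
    by blast
  have top: "Vact \<mu> ((adj f ^^ N) u) hw_vec = (\<lambda>i. poly p1 \<mu> / a * hw_vec i)"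
    using a y(1) by (intro Vact_scaled_evalh_add_mult_e[where y = y1]) simp_all
  have "poly p2 (- \<mu>) = b * (poly p1 \<mu> / a)"
    using Vact_T_evalh_add_mult_f_at_0[of \<mu> p2 y2] fun_cong[OF top, of 0]
    by (simp add: y(2)[symmetric] b(2) Vact_sc_mult hw_vec_def)
  moreover have "annihilates_V sc e f h Q \<mu> \<longleftrightarrow> poly p1 \<mu> = 0"
    unfolding annihilates_V_iff_ad_f_power[OF ue uh R_eq] top using a(1)
    by (auto simp: fun_eq_iff hw_vec_def dest: spec[of _ 0])
  ultimately show ?thesis using a(1) b(1) by simp
qed

end
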